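(* For all types $A$ and $B$: $A \simeq B$ holds if and only if there exist types $A'$ and $B'$ such that $A \equiv A'$, $A' \sim B'$ and $B' \equiv B$.
   Context: Types and rows share one grammar: $A,B,C,\rho ::= X \mid \alpha \mid \star \mid \iota \mid A\to B \mid \forall X{:}K.\,A \mid [\rho] \mid \langle\rho\rangle \mid \cdot \mid \ell{:}A;\rho$, where $X$ ranges over type variables (bound by $\forall$), $\alpha$ over type names, $\star$ is the dynamic type (also serving as the dynamic row), $\iota$ over base types, $[\rho]$ and $\langle\rho\rangle$ are record and variant types, $\cdot$ is the empty row, $\ell$ ranges over labels, and $K\in\{\mathsf T,\mathsf R\}$ is a kind. Types are identified up to renaming of bound variables; $\mathit{ftv}(A)$ is the set of free type variables. Row matching $\rho \triangleright_\ell A,\rho'$ is defined by: $(\ell{:}A;\rho)\triangleright_\ell A,\rho$; if $\ell'\neq\ell$ and $\rho\triangleright_\ell A,\rho'$ then $(\ell'{:}B;\rho)\triangleright_\ell A,(\ell'{:}B;\rho')$; and $\star\triangleright_\ell \star,\star$. $\mathbf{QPoly}(A)$ holds iff $A$ is not of the form $\forall X{:}K.\,B$ and $\star$ occurs in $A$. Row concatenation $\rho_1\odot\rho_2$ is defined only when $\rho_1=\ell_1{:}A_1;\dots;\ell_n{:}A_n;\cdot$, and then equals $\ell_1{:}A_1;\dots;\ell_n{:}A_n;\rho_2$. $\mathit{dom}(\rho)$ is the set of labels in the top-level label prefix of $\rho$. A row $\rho$ ends with $\star$ if $\rho=\rho'\odot\star$ for some $\rho'$. Type equivalence $\equiv$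 is the least equivalence relation that is a congruence for $\to$, $\forall X{:}K.\,-$, $[-]$, $\langle-\rangle$ and $\ell{:}-;-$, and contains $\ell{:}A;\ell'{:}B;\rho \equiv \ell'{:}B;\ell{:}A;\rho$ whenever $\ell\neq\ell'$. Consistency $\simeq$ is defined inductively: $A\simeq A$; $\star\simeq A$; $A\simeq\star$; $A_1\to A_2\simeq B_1\to B_2$ if $A_1\simeq B_1$ and $A_2\simeq B_2$; $\forall X{:}K.A\simeq\forall X{:}K.B$ if $A\simeq B$; $\forall X{:}K.A\simeq B$ if $\mathbf{QPoly}(B)$, $X\notin\mathit{ftv}(B)$ and $A\simeq B$; $A\simeq\forall X{:}K.B$ if $\mathbf{QPoly}(A)$, $X\notin\mathit{ftv}(A)$ and $A\simeq B$; $[\rho_1]\simeq[\rho_2]$ and $\langle\rho_1\rangle\simeq\langle\rho_2\rangle$ if $\rho_1\simeq\rho_2$; $\ell{:}A;\rho_1\simeq B$ if $B\triangleright_\ell B',\rho_2$, $A\simeq B'$ and $\rho_1\simeq\rho_2$; $A\simeq \ell{:}B;\rho_2$ if $A\triangleright_\ell A',\rho_1$, $A'\simeq B$ and $\rho_1\simeq\rho_2$. The relation $\sim$ is defined inductively by the same rules as $\simeq$ for reflexivity, $\star$ on either side, $\to$, $\forall$ (all three $\forall$ rules, with $\sim$ in place of $\simeq$), records and variants, together with: $\ell{:}A;\rho_1\sim\ell{:}B;\rho_2$ if $A\sim B$ and $\rho_1\sim\rho_2$; $\ell{:}A;\rho_1\sim\rho_2$ if $\ell\notin\mathit{dom}(\rho_2)$,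 $\rho_2$ ends with $\star$ and $\rho_1\sim\rho_2$; $\rho_1\sim\ell{:}B;\rho_2$ if $\ell\notin\mathit{dom}(\rho_1)$, $\rho_1$ ends with $\star$ and $\rho_1\sim\rho_2$. *)

theory Defs
  imports Main
begin

(* Kinds T (types) and R (rows) *)
datatype kind = KT | KR

(* Types and rows share one grammar.  Bound type variables X are represented by
   de Bruijn indices (so types are identified up to renaming of bound variables);
   type names, base types and labels are drawn from nat. *)
datatype ty =
    TVar nat
  | TName nat
  | Dyn                 (* star: dynamic type / dynamic row *)
  | Base nat
  | Fun ty ty
  | All kind ty
  | Rcd ty
  | Vnt ty
  | REmpty
  | RCons nat ty ty

fun lift :: "nat \<Rightarrow> ty \<Rightarrow> ty" where
  "lift k (TVar n) = (if n < k then TVar n else TVar (Suc n))"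
| "lift k (TName a) = TName a"
| "lift k Dyn = Dyn"
| "lift k (Base i) = Base i"
| "lift k (Fun A B) = Fun (lift k A) (lift k B)"
| "lift k (All K A) = All K (lift (Suc k) A)"
| "lift k (Rcd r) = Rcd (lift k r)"
| "lift k (Vnt r) = Vnt (lift k r)"
| "lift k REmpty = REmpty"
| "lift k (RCons l A r) = RCons l (lift k A) (lift k r)"

fun ftv :: "ty \<Rightarrow> nat set" where
  "ftv (TVar n) = {n}"
| "ftv (TName a) = {}"
| "ftv Dyn = {}"
| "ftv (Base i) = {}"
| "ftv (Fun A B) = ftv A \<union> ftv B"
| "ftv (All K A) = (\<lambda>n. n - 1) ` (ftv A - {0})"
| "ftv (Rcd r) = ftv r"
| "ftv (Vnt r) = ftv r"
| "ftv REmpty = {}"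
| "ftv (RCons l A r) = ftv A \<union> ftv r"

fun dyn_occurs :: "ty \<Rightarrow> bool" where
  "dyn_occurs (TVar n) = False"
| "dyn_occurs (TName a) = False"
| "dyn_occurs Dyn = True"
| "dyn_occurs (Base i) = False"
| "dyn_occurs (Fun A B) = (dyn_occurs A \<or> dyn_occurs B)"
| "dyn_occurs (All K A) = dyn_occurs A"
| "dyn_occurs (Rcd r) = dyn_occurs r"
| "dyn_occurs (Vnt r) = dyn_occurs r"
| "dyn_occurs REmpty = False"
| "dyn_occurs (RCons l A r) = (dyn_occurs A \<or> dyn_occurs r)"

definition QPoly :: "ty \<Rightarrow> bool" where
  "QPoly A \<longleftrightarrow> (\<nexists>K B. A = All K B) \<and> dyn_occurs A"

inductive rmatch :: "ty \<Rightarrow> nat \<Rightarrow> ty \<Rightarrow> ty \<Rightarrow> bool" where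
  rm_head: "rmatch (RCons l A r) l A r"
| rm_tail: "l' \<noteq> l \<Longrightarrow> rmatch r l A r' \<Longrightarrow> rmatch (RCons l' B r) l A (RCons l' B r')"
| rm_dyn: "rmatch Dyn l Dyn Dyn"

fun rconcat :: "ty \<Rightarrow> ty \<Rightarrow> ty option" where
  "rconcat REmpty r2 = Some r2"
| "rconcat (RCons l A r) r2 = map_option (RCons l A) (rconcat r r2)"
| "rconcat _ r2 = None"

definition ends_dyn :: "ty \<Rightarrow> bool" where
  "ends_dyn r \<longleftrightarrow> (\<exists>r'. rconcat r' Dyn = Some r)"

fun rdom :: "ty \<Rightarrow> nat set" where
  "rdom (RCons l A r) = insert l (rdom r)"
| "rdom _ = {}"

inductive teq :: "ty \<Rightarrow> ty \<Rightarrow> bool" where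
  teq_refl: "teq A A"
| teq_sym: "teq A B \<Longrightarrow> teq B A"
| teq_trans: "teq A B \<Longrightarrow> teq B C \<Longrightarrow> teq A C"
| teq_fun: "teq A1 B1 \<Longrightarrow> teq A2 B2 \<Longrightarrow> teq (Fun A1 A2) (Fun B1 B2)"
| teq_all: "teq A B \<Longrightarrow> teq (All K A) (All K B)"
| teq_rcd: "teq A B \<Longrightarrow> teq (Rcd A) (Rcd B)"
| teq_vnt: "teq A B \<Longrightarrow> teq (Vnt A) (Vnt B)"
| teq_rcons: "teq A B \<Longrightarrow> teq r1 r2 \<Longrightarrow> teq (RCons l A r1) (RCons l B r2)"
| teq_swap: "l \<noteq> l' \<Longrightarrow> teq (RCons l A (RCons l' B r)) (RCons l' B (RCons l A r))"

(* consistency  A \<simeq> B.  The side condition X \<notin> ftv(B) of the named presentation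
   is realised by lifting B under the binder (de Bruijn). *)
inductive cons :: "ty \<Rightarrow> ty \<Rightarrow> bool" where
  c_refl: "cons A A"
| c_dynL: "cons Dyn A"
| c_dynR: "cons A Dyn"
| c_fun: "cons A1 B1 \<Longrightarrow> cons A2 B2 \<Longrightarrow> cons (Fun A1 A2) (Fun B1 B2)"
| c_all: "cons A B \<Longrightarrow> cons (All K A) (All K B)"
| c_allL: "QPoly B \<Longrightarrow> cons A (lift 0 B) \<Longrightarrow> cons (All K A) B"
| c_allR: "QPoly A \<Longrightarrow> cons (lift 0 A) B \<Longrightarrow> cons A (All K B)"
| c_rcd: "cons r1 r2 \<Longrightarrow> cons (Rcd r1) (Rcd r2)"
| c_vnt: "cons r1 r2 \<Longrightarrow> cons (Vnt r1) (Vnt r2)"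
| c_rowL: "rmatch B l B' r2 \<Longrightarrow> cons A B' \<Longrightarrow> cons r1 r2 \<Longrightarrow> cons (RCons l A r1) B"
| c_rowR: "rmatch A l A' r1 \<Longrightarrow> cons A' B \<Longrightarrow> cons r1 r2 \<Longrightarrow> cons A (RCons l B r2)"

inductive sim :: "ty \<Rightarrow> ty \<Rightarrow> bool" where
  s_refl: "sim A A"
| s_dynL: "sim Dyn A"
| s_dynR: "sim A Dyn"
| s_fun: "sim A1 B1 \<Longrightarrow> sim A2 B2 \<Longrightarrow> sim (Fun A1 A2) (Fun B1 B2)"
| s_all: "sim A B \<Longrightarrow> sim (All K A) (All K B)"
| s_allL: "QPoly B \<Longrightarrow> sim A (lift 0 B) \<Longrightarrow> sim (All K A) B"
| s_allR: "QPoly A \<Longrightarrow> sim (lift 0 A) B \<Longrightarrow> sim A (All K B)"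
| s_rcd: "sim r1 r2 \<Longrightarrow> sim (Rcd r1) (Rcd r2)"
| s_vnt: "sim r1 r2 \<Longrightarrow> sim (Vnt r1) (Vnt r2)"
| s_rcons: "sim A B \<Longrightarrow> sim r1 r2 \<Longrightarrow> sim (RCons l A r1) (RCons l B r2)"
| s_rowL: "l \<notin> rdom r2 \<Longrightarrow> ends_dyn r2 \<Longrightarrow> sim r1 r2 \<Longrightarrow> sim (RCons l A r1) r2"
| s_rowR: "l \<notin> rdom r1 \<Longrightarrow> ends_dyn r1 \<Longrightarrow> sim r1 r2 \<Longrightarrow> sim r1 (RCons l B r2)"

end

theory Submission
  imports Defs
begin

(* Right to left: \<sim> is contained in \<simeq>, and \<simeq> is invariant under \<equiv> on either side.
   Since \<equiv> is the reflexive-transitive closure of a single swap of adjacent fields anywhere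
   inside a type, and \<simeq> is symmetric, it suffices that \<simeq> is preserved by one swap on the
   right.  The only delicate case is a swap at the head of a row produced by the right row
   rule; it is covered by the fact that \<simeq> is compatible with inserting a matched field
   on both sides simultaneously.

   Left to right, by induction on \<simeq>: when a row rule matches the label l inside B, either
   the field really occurs in B, and \<equiv> moves it to the front so that the \<sim> rule for
   equal heads applies, or B lacks l and ends with \<star>, and one of the \<sim> rules for
   absent labels applies.  For the rules with a quantifier on one side only, \<equiv>-equivalents
   of a lifted type are themselves lifted, so the side condition carries over. *)

lemma rtranclp_map:
  assumes "r\<^sup>*\<^sup>* a b" and "\<And>x y. r x y \<Longrightarrow> s (f x) (f y)"
  shows "s\<^sup>*\<^sup>* (f a) (f b)"
  using assms(1) by (induction rule: rtranclp_induct) (auto intro: rtranclp.rtrancl_into_rtrancl assms(2))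

lemma rconcat_Dyn_shape: "rconcat r' Dyn = Some r \<Longrightarrow> r = Dyn \<or> (\<exists>l A r''. r = RCons l A r'')"
  by (cases r') auto

lemma ends_dyn_simps [simp]:
  "ends_dyn Dyn"
  "ends_dyn (RCons l A r) \<longleftrightarrow> ends_dyn r"
  "\<not> ends_dyn (TVar n)" "\<not> ends_dyn (TName a)" "\<not> ends_dyn (Base i)" "\<not> ends_dyn REmpty"
  "\<not> ends_dyn (Fun A B)" "\<not> ends_dyn (All K A)" "\<not> ends_dyn (Rcd A)" "\<not> ends_dyn (Vnt A)"
proof -
  show "ends_dyn Dyn"
    unfolding ends_dyn_def by (auto intro: exI[of _ REmpty])
  show "ends_dyn (RCons l A r) \<longleftrightarrow> ends_dyn r"
  proof
    assume "ends_dyn (RCons l A r)"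
    then obtain r' where "rconcat r' Dyn = Some (RCons l A r)"
      unfolding ends_dyn_def by blast
    then show "ends_dyn r"
      unfolding ends_dyn_def by (cases r') auto
  next
    assume "ends_dyn r"
    then obtain r' where "rconcat r' Dyn = Some r"
      unfolding ends_dyn_def by blast
    then show "ends_dyn (RCons l A r)"
      unfolding ends_dyn_def by (auto intro!: exI[of _ "RCons l A r'"])
  qed
qed (auto simp: ends_dyn_def dest: rconcat_Dyn_shape)

subsection \<open>Type equivalence as a closure of field swaps\<close>

inductive swap_step :: "ty \<Rightarrow> ty \<Rightarrow> bool" where
  swap: "l \<noteq> l' \<Longrightarrow> swap_step (RCons l A (RCons l' B r)) (RCons l' B (RCons l A r))"
| fun1: "swap_step A A' \<Longrightarrow> swap_step (Fun A B) (Fun A' B)"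
| fun2: "swap_step B B' \<Longrightarrow> swap_step (Fun A B) (Fun A B')"
| all: "swap_step A A' \<Longrightarrow> swap_step (All K A) (All K A')"
| rcd: "swap_step A A' \<Longrightarrow> swap_step (Rcd A) (Rcd A')"
| vnt: "swap_step A A' \<Longrightarrow> swap_step (Vnt A) (Vnt A')"
| field: "swap_step A A' \<Longrightarrow> swap_step (RCons l A r) (RCons l A' r)"
| tail: "swap_step r r' \<Longrightarrow> swap_step (RCons l A r) (RCons l A r')"

inductive_cases swap_step_DynE: "swap_step Dyn B"
inductive_cases swap_step_FunE: "swap_step (Fun A B) C"
inductive_cases swap_step_AllE: "swap_step (All K A) C"
inductive_cases swap_step_RcdE: "swap_step (Rcd A) C"
inductive_cases swap_step_VntE: "swap_step (Vnt A) C"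
inductive_cases swap_step_RConsE [consumes 1, case_names swap field tail]:
  "swap_step (RCons l A r) C"

lemma symp_swap_step: "symp swap_step"
proof (rule sympI)
  show "swap_step B A" if "swap_step A B" for A B
    using that by (induction rule: swap_step.induct) (auto intro: swap_step.intros)
qed

lemma swap_step_imp_teq: "swap_step A B \<Longrightarrow> teq A B"
  by (induction rule: swap_step.induct) (auto intro: teq.intros)

lemma teq_iff_swap_steps: "teq A B \<longleftrightarrow> swap_step\<^sup>*\<^sup>* A B"
proof
  assume "teq A B"
  then show "swap_step\<^sup>*\<^sup>* A B"
  proof (induction rule: teq.induct)
    case (teq_sym A B)
    then show ?case
      using symp_rtranclp[OF symp_swap_step] by (blast dest: sympD)
  next
    case (teq_fun A1 B1 A2 B2)
    have "swap_step\<^sup>*\<^sup>* (Fun A1 A2) (Fun B1 A2)"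
      using rtranclp_map[OF teq_fun.IH(1), of swap_step "\<lambda>x. Fun x A2"] by (auto intro: swap_step.fun1)
    also have "swap_step\<^sup>*\<^sup>* (Fun B1 A2) (Fun B1 B2)"
      using rtranclp_map[OF teq_fun.IH(2), of swap_step "Fun B1"] by (auto intro: swap_step.fun2)
    finally show ?case .
  next
    case (teq_rcons A B r1 r2 l)
    have "swap_step\<^sup>*\<^sup>* (RCons l A r1) (RCons l B r1)"
      using rtranclp_map[OF teq_rcons.IH(1), of swap_step "\<lambda>x. RCons l x r1"] by (auto intro: swap_step.field)
    also have "swap_step\<^sup>*\<^sup>* (RCons l B r1) (RCons l B r2)"
      using rtranclp_map[OF teq_rcons.IH(2), of swap_step "RCons l B"] by (auto intro: swap_step.tail)
    finally show ?case .
  qed (auto intro: rtranclp_map swap_step.intros)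
next
  assume "swap_step\<^sup>*\<^sup>* A B"
  then show "teq A B"
    by (induction rule: rtranclp_induct) (auto intro: teq.intros swap_step_imp_teq)
qed

lemma teq_dyn_occurs: "teq A B \<Longrightarrow> dyn_occurs A = dyn_occurs B"
  by (induction rule: teq.induct) auto

lemma teq_QPoly: "teq A B \<Longrightarrow> QPoly A = QPoly B"
  by (induction rule: teq.induct) (auto simp: QPoly_def dest: teq_dyn_occurs)

lemma teq_rdom: "teq A B \<Longrightarrow> rdom A = rdom B"
  by (induction rule: teq.induct) auto

lemma teq_ends_dyn: "teq A B \<Longrightarrow> ends_dyn A = ends_dyn B"
  by (induction rule: teq.induct) auto

lemma lift_eq_iff:
  "Fun A1 A2 = lift k B \<longleftrightarrow> (\<exists>B1 B2. B = Fun B1 B2 \<and> A1 = lift k B1 \<and> A2 = lift k B2)"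
  "All K A = lift k B \<longleftrightarrow> (\<exists>B'. B = All K B' \<and> A = lift (Suc k) B')"
  "Rcd A = lift k B \<longleftrightarrow> (\<exists>B'. B = Rcd B' \<and> A = lift k B')"
  "Vnt A = lift k B \<longleftrightarrow> (\<exists>B'. B = Vnt B' \<and> A = lift k B')"
  "RCons l A r = lift k B \<longleftrightarrow> (\<exists>B' r'. B = RCons l B' r' \<and> A = lift k B' \<and> r = lift k r')"
  by (cases B; auto)+

lemma swap_step_lift: "swap_step A B \<Longrightarrow> swap_step (lift k A) (lift k B)"
  by (induction arbitrary: k rule: swap_step.induct) (auto intro: swap_step.intros)

lemma swap_step_lift_inv: "swap_step (lift k B) C \<Longrightarrow> \<exists>B'. C = lift k B' \<and> swap_step B B'"
proof (induction "lift k B" C arbitrary: k B rule: swap_step.induct)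
  case (swap l l' A1 A2 r)
  then obtain B1 B2 r' where "B = RCons l B1 (RCons l' B2 r')"
    and "A1 = lift k B1" "A2 = lift k B2" "r = lift k r'"
    by (auto simp: lift_eq_iff)
  with swap show ?case
    by (auto intro!: exI[of _ "RCons l' B2 (RCons l B1 r')"] swap_step.swap)
qed (fastforce simp: lift_eq_iff intro: swap_step.intros)+

lemma teq_lift_inv: "teq C (lift k B) \<Longrightarrow> \<exists>B'. C = lift k B' \<and> teq B' B"
proof -
  assume "teq C (lift k B)"
  then have "swap_step\<^sup>*\<^sup>* (lift k B) C"
    by (simp add: teq_iff_swap_steps[symmetric] teq_sym)
  then have "\<exists>B'. C = lift k B' \<and> swap_step\<^sup>*\<^sup>* B B'"
  proof (induction rule: rtranclp_induct)
    case (step C D)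
    then show ?case
      using swap_step_lift_inv by (blast intro: rtranclp.rtrancl_into_rtrancl)
  qed auto
  then show ?thesis
    by (auto simp: teq_iff_swap_steps[symmetric] intro: teq_sym)
qed

inductive_cases rmatch_RConsE: "rmatch (RCons k V r) l A r'"
inductive_cases rmatch_DynE: "rmatch Dyn l A r'"

lemma rmatch_RCons_restE:
  assumes "rmatch A l A' (RCons k V r)"
  obtains "A = RCons l A' (RCons k V r)"
    | A2 where "k \<noteq> l" "A = RCons k V A2" "rmatch A2 l A' r"
  using assms by (cases rule: rmatch.cases) auto

lemma rmatch_non_RCons_rest:
  "rmatch A l A' r \<Longrightarrow> \<forall>k V r'. r \<noteq> RCons k V r' \<Longrightarrow> A = RCons l A' r \<or> A = Dyn"
  by (cases rule: rmatch.cases) auto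

lemma rmatch_absent_label: "l \<notin> rdom r \<Longrightarrow> ends_dyn r \<Longrightarrow> rmatch r l Dyn r"
  by (induction r) (auto intro: rmatch.intros)

lemma rmatch_commute:
  "rmatch A l A' r \<Longrightarrow> rmatch r m M rm \<Longrightarrow> m \<noteq> l \<Longrightarrow> \<exists>Am. rmatch A m M Am \<and> rmatch Am l A' rm"
proof (induction arbitrary: rm rule: rmatch.induct)
  case (rm_head l A r)
  then show ?case by (auto intro: rmatch.intros)
next
  case (rm_tail k l r A r' V)
  show ?case
  proof (cases "k = m")
    case True
    with rm_tail.prems have "M = V" "rm = r'" by (auto elim: rmatch_RConsE)
    with True rm_tail show ?thesis by (auto intro: rmatch.intros)
  next
    case False
    with rm_tail.prems obtain r3 where "rm = RCons k V r3" "rmatch r' m M r3"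
      by (auto elim: rmatch_RConsE)
    with rm_tail obtain Am where "rmatch r m M Am" "rmatch Am l A r3" by blast
    with False rm_tail \<open>rm = RCons k V r3\<close> show ?thesis
      by (auto intro!: exI[of _ "RCons k V Am"] rmatch.intros)
  qed
next
  case (rm_dyn l)
  then show ?case by (auto elim: rmatch_DynE intro: rmatch.intros)
qed

lemma rmatch_swap_step:
  "rmatch B l C r \<Longrightarrow> swap_step B B' \<Longrightarrow>
    \<exists>C' r'. rmatch B' l C' r' \<and> (C' = C \<or> swap_step C C') \<and> (r' = r \<or> swap_step r r')"
proof (induction arbitrary: B' rule: rmatch.induct)
  case (rm_head l A r)
  then show ?case by (auto elim!: swap_step_RConsE intro: rmatch.intros)
next
  case (rm_tail l' l r A r' B)
  from rm_tail.prems show ?case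
  proof (cases rule: swap_step_RConsE)
    case (swap l'' E r0)
    show ?thesis
    proof (cases "l'' = l")
      case True
      with swap rm_tail.hyps have "A = E" "r' = r0" by (auto elim: rmatch_RConsE)
      with swap True rm_tail.hyps show ?thesis by (auto intro: rmatch.intros)
    next
      case False
      with swap rm_tail.hyps obtain r1 where "r' = RCons l'' E r1" "rmatch r0 l A r1"
        by (auto elim: rmatch_RConsE)
      with swap False rm_tail.hyps have "rmatch B' l A (RCons l'' E (RCons l' B r1))"
        and "swap_step (RCons l' B r') (RCons l'' E (RCons l' B r1))"
        by (auto intro: rmatch.intros swap_step.swap)
      then show ?thesis by blast
    qed
  next
    case (field D)
    with rm_tail show ?thesis by (auto intro: rmatch.intros swap_step.field)
  next
    case (tail r0)
    with rm_tail obtain C' r1 where "rmatch r0 l C' r1" "C' = A \<or> swap_step A C'"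
      and "r1 = r' \<or> swap_step r' r1"
      by blast
    with tail rm_tail.hyps show ?thesis by (auto intro: rmatch.intros swap_step.tail)
  qed
next
  case (rm_dyn l)
  then show ?case by (auto elim: swap_step_DynE)
qed

lemma rmatch_teq_or_absent:
  "rmatch B l B' r \<Longrightarrow> teq (RCons l B' r) B \<or> (B' = Dyn \<and> r = B \<and> l \<notin> rdom B \<and> ends_dyn B)"
proof (induction rule: rmatch.induct)
  case (rm_tail l' l r A r' B)
  then show ?case
  proof (elim disjE)
    assume "teq (RCons l A r') r"
    then have "teq (RCons l A (RCons l' B r')) (RCons l' B r)"
      using rm_tail.hyps by (metis teq_swap teq_rcons teq_refl teq_trans)
    then show ?thesis by simp
  qed auto
qed (auto intro: teq_refl)

subsection \<open>Consistency is invariant under type equivalence\<close>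

lemma cons_sym: "cons A B \<Longrightarrow> cons B A"
  by (induction rule: cons.induct) (auto intro: cons.intros)

lemma swap_step_imp_cons: "swap_step A B \<Longrightarrow> cons A B"
proof (induction rule: swap_step.induct)
  case (swap l l' A B r)
  then have "rmatch (RCons l' B (RCons l A r)) l A (RCons l' B r)"
    by (auto intro: rmatch.intros)
  then show ?case by (rule c_rowL) (rule c_refl)+
qed (auto intro: cons.intros rm_head)

lemma cons_rmatch_insert_same:
  "rmatch A l A' r \<Longrightarrow> rmatch B l B' r \<Longrightarrow> cons A' B' \<Longrightarrow> cons A B"
proof (induction arbitrary: B rule: rmatch.induct)
  case (rm_tail k l r A r' V)
  from rm_tail.prems(1) show ?case
  proof (cases rule: rmatch_RCons_restE)
    case 1
    then show ?thesis using rm_tail by (auto intro: cons.intros rmatch.intros)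
  next
    case (2 B2)
    then show ?thesis using rm_tail by (auto intro!: c_rowL[of _ k V] intro: rmatch.intros cons.intros)
  qed
qed (auto intro: cons.intros elim: rmatch_DynE)

lemma cons_rmatch_insert_base:
  assumes "rmatch A l A' r1" "rmatch B l B' r2" "cons A' B'" "cons r1 r2"
    and "(\<forall>k V r. r1 \<noteq> RCons k V r) \<or> (\<forall>k V r. r2 \<noteq> RCons k V r)"
  shows "cons A B"
  using assms(5)
proof (elim disjE)
  assume "\<forall>k V r. r1 \<noteq> RCons k V r"
  with assms(1) have "A = RCons l A' r1 \<or> A = Dyn" by (rule rmatch_non_RCons_rest)
  with assms(2-4) show ?thesis by (auto intro: c_rowL c_dynL)
next
  assume "\<forall>k V r. r2 \<noteq> RCons k V r"
  with assms(2) have "B = RCons l B' r2 \<or> B = Dyn" by (rule rmatch_non_RCons_rest)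
  with assms(1,3,4) show ?thesis by (auto intro: c_rowR c_dynR)
qed

lemma cons_rmatch_insert:
  "cons r1 r2 \<Longrightarrow> rmatch A l A' r1 \<Longrightarrow> rmatch B l B' r2 \<Longrightarrow> cons A' B' \<Longrightarrow> cons A B"
proof (induction arbitrary: A B rule: cons.induct)
  case (c_refl r)
  then show ?case by (rule cons_rmatch_insert_same)
next
  case (c_rowL r2 k V' r2k V r1k)
  from c_rowL.prems(1) show ?case
  proof (cases rule: rmatch_RCons_restE)
    case 1
    have "cons (RCons k V r1k) r2" using c_rowL.hyps by (rule cons.c_rowL)
    with 1 c_rowL.prems(2,3) show ?thesis by (simp add: cons.c_rowL)
  next
    case (2 A2)
    obtain Bk where "rmatch B k V' Bk" "rmatch Bk l B' r2k"
      using rmatch_commute[OF c_rowL.prems(2) c_rowL.hyps(1)] 2 by auto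
    moreover from 2 this(2) have "cons A2 Bk" using c_rowL.IH(2) c_rowL.prems(3) by blast
    ultimately show ?thesis using 2 c_rowL.hyps(2) by (simp add: cons.c_rowL)
  qed
next
  case (c_rowR r1 m W' r1m W r2m)
  from c_rowR.prems(2) show ?case
  proof (cases rule: rmatch_RCons_restE)
    case 1
    have "cons r1 (RCons m W r2m)" using c_rowR.hyps by (rule cons.c_rowR)
    with 1 c_rowR.prems(1,3) show ?thesis by (simp add: cons.c_rowR)
  next
    case (2 B2)
    obtain Am where "rmatch A m W' Am" "rmatch Am l A' r1m"
      using rmatch_commute[OF c_rowR.prems(1) c_rowR.hyps(1)] 2 by auto
    moreover from 2 this(2) have "cons Am B2" using c_rowR.IH(2) c_rowR.prems(3) by blast
    ultimately show ?thesis using 2 c_rowR.hyps(2) by (simp add: cons.c_rowR)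
  qed
  \<comment> \<open>in the other rules one row is not of the form l:A;\<rho>, so a field matched in it is its head\<close>
qed (rule cons_rmatch_insert_base, assumption+, auto intro: cons.intros)+

lemma cons_swap_step_right: "cons A B \<Longrightarrow> swap_step B B' \<Longrightarrow> cons A B'"
proof (induction arbitrary: B' rule: cons.induct)
  case (c_refl A)
  then show ?case by (rule swap_step_imp_cons)
next
  case (c_dynR A)
  then show ?case by (auto elim: swap_step_DynE)
next
  case (c_allL B A K)
  have "QPoly B'" using c_allL.hyps(1) c_allL.prems swap_step_imp_teq teq_QPoly by blast
  moreover have "swap_step (lift 0 B) (lift 0 B')" using c_allL.prems by (rule swap_step_lift)
  ultimately show ?case using c_allL.IH by (blast intro: cons.c_allL)
next
  case (c_rowL B l B0 r2 A r1)
  obtain C r where "rmatch B' l C r" "C = B0 \<or> swap_step B0 C" "r = r2 \<or> swap_step r2 r"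
    using rmatch_swap_step[OF c_rowL.hyps(1) c_rowL.prems] by blast
  with c_rowL.hyps(2,3) c_rowL.IH show ?case by (blast intro: cons.c_rowL)
next
  case (c_rowR A l A0 r1 B r2)
  from c_rowR.prems show ?case
  proof (cases rule: swap_step_RConsE)
    case (swap l' C r)
    have "rmatch B' l B (RCons l' C r)"
      using swap by (auto intro: rmatch.intros)
    moreover have "cons r1 (RCons l' C r)"
      using c_rowR.hyps(3) swap by simp
    ultimately show ?thesis
      using cons_rmatch_insert c_rowR.hyps(1,2) by blast
  qed (use c_rowR in \<open>auto intro: cons.c_rowR\<close>)
qed (auto elim!: swap_step_FunE swap_step_AllE swap_step_RcdE swap_step_VntE intro: cons.intros)

lemma cons_teq_right: "cons A B \<Longrightarrow> teq B B' \<Longrightarrow> cons A B'"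
proof -
  assume "cons A B" "teq B B'"
  from \<open>teq B B'\<close> have "swap_step\<^sup>*\<^sup>* B B'" by (simp add: teq_iff_swap_steps)
  then show "cons A B'" using \<open>cons A B\<close>
    by (induction rule: rtranclp_induct) (auto intro: cons_swap_step_right)
qed

lemma cons_teq_closed: "teq A A' \<Longrightarrow> cons A' B' \<Longrightarrow> teq B' B \<Longrightarrow> cons A B"
  by (meson cons_sym cons_teq_right teq_sym)

lemma sim_imp_cons: "sim A B \<Longrightarrow> cons A B"
proof (induction rule: sim.induct)
  case (s_rcons A B r1 r2 l)
  then show ?case by (metis c_rowL rm_head)
next
  case (s_rowL l r2 r1 A)
  then have "rmatch r2 l Dyn r2" by (simp add: rmatch_absent_label)
  with s_rowL show ?case by (metis c_rowL c_dynR)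
next
  case (s_rowR l r1 r2 B)
  then have "rmatch r1 l Dyn r1" by (simp add: rmatch_absent_label)
  with s_rowR show ?case by (metis c_rowR c_dynL)
qed (auto intro: cons.intros)

lemma cons_imp_teq_sim: "cons A B \<Longrightarrow> \<exists>A' B'. teq A A' \<and> sim A' B' \<and> teq B' B"
proof (induction rule: cons.induct)
  case (c_fun A1 B1 A2 B2)
  then show ?case by (meson teq_fun s_fun)
next
  case (c_all A B K)
  then show ?case by (meson teq_all s_all)
next
  case (c_rcd r1 r2)
  then show ?case by (meson teq_rcd s_rcd)
next
  case (c_vnt r1 r2)
  then show ?case by (meson teq_vnt s_vnt)
next
  case (c_allL B A K)
  then obtain A1 C where "teq A A1" "sim A1 C" "teq C (lift 0 B)" by blast
  moreover from this(3) obtain B1 where "C = lift 0 B1" "teq B1 B" by (blast dest: teq_lift_inv)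
  moreover from this(2) have "QPoly B1" using c_allL.hyps(1) teq_QPoly by blast
  ultimately show ?case by (meson teq_all s_allL)
next
  case (c_allR A B K)
  then obtain B1 C where "teq (lift 0 A) C" "sim C B1" "teq B1 B" by blast
  moreover from this(1) obtain A1 where "C = lift 0 A1" "teq A1 A" by (blast dest: teq_lift_inv teq_sym)
  moreover from this(2) have "QPoly A1" using c_allR.hyps(1) teq_QPoly by blast
  ultimately show ?case by (meson teq_all teq_sym s_allR)
next
  case (c_rowL B l B0 r2 A r1)
  then obtain A1 B1 r1' r2' where IH: "teq A A1" "sim A1 B1" "teq B1 B0" "teq r1 r1'" "sim r1' r2'" "teq r2' r2"
    by blast
  from rmatch_teq_or_absent[OF c_rowL.hyps(1)] show ?case
  proof (elim disjE conjE)
    assume "teq (RCons l B0 r2) B"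
    with IH show ?thesis by (meson teq_rcons s_rcons teq_trans)
  next
    assume absent: "B0 = Dyn" "r2 = B" "l \<notin> rdom B" "ends_dyn B"
    with IH(6) have "l \<notin> rdom r2'" "ends_dyn r2'" using teq_rdom teq_ends_dyn by auto
    with IH(5) have "sim (RCons l A1 r1') r2'" by (rule s_rowL[rotated 2])
    with IH absent show ?thesis by (meson teq_rcons)
  qed
next
  case (c_rowR A l A0 r1 B r2)
  then obtain A1 B1 r1' r2' where IH: "teq A0 A1" "sim A1 B1" "teq B1 B" "teq r1 r1'" "sim r1' r2'" "teq r2' r2"
    by blast
  from rmatch_teq_or_absent[OF c_rowR.hyps(1)] show ?case
  proof (elim disjE conjE)
    assume "teq (RCons l A0 r1) A"
    with IH show ?thesis by (meson teq_rcons s_rcons teq_trans teq_sym)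
  next
    assume absent: "A0 = Dyn" "r1 = A" "l \<notin> rdom A" "ends_dyn A"
    with IH(4) have "l \<notin> rdom r1'" "ends_dyn r1'" using teq_rdom teq_ends_dyn by auto
    with IH(5) have "sim r1' (RCons l B1 r2')" by (rule s_rowR[rotated 2])
    with IH absent show ?thesis by (meson teq_rcons)
  qed
qed (auto intro: teq_refl sim.intros)

theorem mainTheorem1:
  shows "cons A B \<longleftrightarrow> (\<exists>A' B'. teq A A' \<and> sim A' B' \<and> teq B' B)"
  using cons_imp_teq_sim sim_imp_cons cons_teq_closed by blast

end
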